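(* For $0<p<2$, $$\lim_{\eta\to0}\frac{\bar\rho_p(\eta)}{\eta^p\log^{2-p}\log\frac1\eta}=1.$$
   Context: $\mathcal F_p(\eta)$ denotes the set of probability distributions $F$ on $[1,\infty)$ with $\int\log^p(\mu)\,dF(\mu)\le\eta^p$. For a scalar random $\mu\sim F$ and $X\mid\mu\sim\mathrm{Exp}(\mu)$ (exponential with mean $\mu$), the univariate minimax-Bayes risk is $\bar\rho_p(\eta)=\inf_\delta\sup_{F\in\mathcal F_p(\eta)}\mathbb{E}_F\mathbb{E}_\mu(\log\delta(X)-\log\mu)^2$, the infimum over measurable $\delta:[0,\infty)\to(0,\infty)$. *)

theory Defs
  imports "HOL-Probability.Probability"
begin

definition prior_class :: "real \<Rightarrow> real \<Rightarrow> real measure set" where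
  "prior_class p \<eta> = {F. prob_space F \<and> sets F = sets borel \<and> emeasure F {..<1} = 0 \<and>
      (\<integral>\<^sup>+ \<mu>. ennreal ((ln \<mu>) powr p) \<partial>F) \<le> ennreal (\<eta> powr p)}"

definition estimators :: "(real \<Rightarrow> real) set" where
  "estimators = {\<delta>. \<delta> \<in> borel_measurable borel \<and> (\<forall>x\<ge>0. \<delta> x > 0)}"

text \<open>Bayes risk E_F E_mu (log delta(X) - log mu)^2, X | mu ~ Exp with mean mu
  (i.e. rate 1/mu).\<close>
definition bayes_risk :: "real measure \<Rightarrow> (real \<Rightarrow> real) \<Rightarrow> ennreal" where
  "bayes_risk F \<delta> = (\<integral>\<^sup>+ \<mu>. (\<integral>\<^sup>+ x. ennreal (exponential_density (1 / \<mu>) x *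
       (ln (\<delta> x) - ln \<mu>)\<^sup>2) \<partial>lborel) \<partial>F)"

definition minimax_bayes_risk :: "real \<Rightarrow> real \<Rightarrow> ennreal" where
  "minimax_bayes_risk p \<eta> = (INF \<delta>\<in>estimators. SUP F\<in>prior_class p \<eta>. bayes_risk F \<delta>)"

end

theory Submission
  imports Defs "HOL-Real_Asymp.Real_Asymp"
begin

text \<open>
  Upper bound: the threshold estimator, which reports 1 for observations below t and the
  observation itself above t, has risk at most 16 e exp(-t/(2e)) + (log^(2-p) t + 6) log^p \<mu>
  at every \<mu> \<ge> 1. Averaging over a prior in F_p(\<eta>) turns log^p \<mu> into \<eta>^p, and
  t = 2e(p+1) log(1/\<eta>) makes the first term \<eta>^(p+1) while log t \<sim> log log(1/\<eta>).

  Lower bound: the prior with mass \<epsilon> at M and 1 - \<epsilon> at 1, where \<epsilon> log^p M = \<eta>^p, lies in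
  F_p(\<eta>). On observations below log(1/\<epsilon>) the two likelihoods are comparable, so every
  estimator pays about \<epsilon> log^2 M = \<eta>^p log^(2-p) M there; this event has probability
  tending to 1 under \<mu> = M as soon as M = o(log(1/\<eta>)), and M = log(1/\<eta>) / log log(1/\<eta>)
  still has log M \<sim> log log(1/\<eta>).
\<close>

definition risk :: "(real \<Rightarrow> real) \<Rightarrow> real \<Rightarrow> ennreal" where
  "risk \<delta> \<mu> = (\<integral>\<^sup>+ x. ennreal (exponential_density (1 / \<mu>) x * (ln (\<delta> x) - ln \<mu>)\<^sup>2) \<partial>lborel)"

lemma borel_measurable_risk:
  assumes [measurable]: "\<delta> \<in> borel_measurable borel"
  shows "risk \<delta> \<in> borel_measurable borel"
  unfolding risk_def exponential_density_def
  by (rule lborel.borel_measurable_nn_integral) measurable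

lemma bayes_risk_eq_nn_integral_risk: "bayes_risk F \<delta> = (\<integral>\<^sup>+ \<mu>. risk \<delta> \<mu> \<partial>F)"
  unfolding bayes_risk_def risk_def ..

section \<open>Lower bound via a two-point prior\<close>

lemma two_point_quadratic_lower_bound:
  fixes a b k d L :: real
  assumes "0 \<le> a" "0 \<le> b" "0 \<le> k" "k \<le> 1" "b \<le> k * a"
  shows "(1 - k) * b * L\<^sup>2 \<le> a * d\<^sup>2 + b * (d - L)\<^sup>2"
proof (cases "a + b = 0")
  case True
  then have "a = 0" "b = 0" using assms by linarith+
  then show ?thesis by simp
next
  case False
  then have pos: "0 < a + b" using assms by linarith
  have "(1 - k) * (a + b) = a + b - k * a - k * b"
    by (simp add: algebra_simps)
  also have "\<dots> \<le> a"
    using assms mult_nonneg_nonneg[of k b] by linarith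
  finally have "(1 - k) * (a + b) \<le> a" .
  then have "(1 - k) * (a + b) * (b * L\<^sup>2) \<le> a * (b * L\<^sup>2)"
    by (rule mult_right_mono) (use assms in simp)
  also have "\<dots> \<le> ((a + b) * d - b * L)\<^sup>2 + a * b * L\<^sup>2"
    by simp
  also have "\<dots> = (a + b) * (a * d\<^sup>2 + b * (d - L)\<^sup>2)"
    by (simp add: power2_eq_square algebra_simps)
  finally have "(a + b) * ((1 - k) * b * L\<^sup>2) \<le> (a + b) * (a * d\<^sup>2 + b * (d - L)\<^sup>2)"
    by (simp add: algebra_simps)
  then show ?thesis using pos by simp
qed

lemma two_point_loss_lower_bound:
  fixes \<epsilon> M x d :: real
  assumes "0 < \<epsilon>" "\<epsilon> < 1" "1 < M" "1 / (M * (1 - \<epsilon>)) \<le> 1" "0 \<le> x" "x \<le> ln (1 / \<epsilon>)"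
  shows "(1 - 1 / (M * (1 - \<epsilon>))) * \<epsilon> * (ln M)\<^sup>2 * exponential_density (1 / M) x
    \<le> (1 - \<epsilon>) * exponential_density 1 x * d\<^sup>2 + \<epsilon> * exponential_density (1 / M) x * (d - ln M)\<^sup>2"
proof -
  define k where "k = 1 / (M * (1 - \<epsilon>))"
  txt \<open>Below log(1/\<epsilon>) the weighted likelihood of M is at most k times that of 1.\<close>
  have "\<epsilon> \<le> exp (- x)"
    using assms exp_mono[of "- ln (1 / \<epsilon>)" "- x"] by (simp add: ln_div)
  then have "\<epsilon> / M * exp (- (x / M)) \<le> exp (- x) / M * 1"
    using assms by (intro mult_mono divide_right_mono) auto
  also have "\<dots> = k * ((1 - \<epsilon>) * exponential_density 1 x)"
    using assms by (simp add: k_def exponential_density_def)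
  finally have "\<epsilon> * exponential_density (1 / M) x \<le> k * ((1 - \<epsilon>) * exponential_density 1 x)"
    using assms by (simp add: exponential_density_def)
  then have "(1 - k) * (\<epsilon> * exponential_density (1 / M) x) * (ln M)\<^sup>2
    \<le> ((1 - \<epsilon>) * exponential_density 1 x) * d\<^sup>2 + (\<epsilon> * exponential_density (1 / M) x) * (d - ln M)\<^sup>2"
    using assms by (intro two_point_quadratic_lower_bound) (auto simp: k_def exponential_density_def)
  then show ?thesis
    unfolding k_def by (simp add: mult_ac)
qed

definition two_point_bound :: "real \<Rightarrow> real \<Rightarrow> real" where
  "two_point_bound \<epsilon> M = (1 - 1 / (M * (1 - \<epsilon>))) * \<epsilon> * (ln M)\<^sup>2 * (1 - exp (- ln (1 / \<epsilon>) / M))"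

lemma two_point_risk_lower_bound:
  assumes [measurable]: "\<delta> \<in> borel_measurable borel"
    and "0 < \<epsilon>" "\<epsilon> < 1" "1 < M" "1 / (M * (1 - \<epsilon>)) \<le> 1"
  shows "ennreal (two_point_bound \<epsilon> M) \<le> ennreal (1 - \<epsilon>) * risk \<delta> 1 + ennreal \<epsilon> * risk \<delta> M"
proof -
  define c where "c = (1 - 1 / (M * (1 - \<epsilon>))) * \<epsilon> * (ln M)\<^sup>2"
  define x\<^sub>0 where "x\<^sub>0 = ln (1 / \<epsilon>)"
  have c0: "0 \<le> c" and x0: "0 \<le> x\<^sub>0"
    using assms by (simp_all add: c_def x\<^sub>0_def)
  have "ennreal (two_point_bound \<epsilon> M) = ennreal c * erlang_CDF 0 (1 / M) x\<^sub>0"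
    using assms c0 x0
    by (simp add: two_point_bound_def c_def x\<^sub>0_def erlang_CDF_0 ennreal_mult[symmetric] mult.commute)
  also have "\<dots> = (\<integral>\<^sup>+ x. ennreal c * (ennreal (exponential_density (1 / M) x) * indicator {..x\<^sub>0} x) \<partial>lborel)"
    using assms by (simp add: nn_integral_erlang_density nn_integral_cmult)
  also have "\<dots> \<le> (\<integral>\<^sup>+ x. ennreal (1 - \<epsilon>) * ennreal (exponential_density 1 x * (ln (\<delta> x))\<^sup>2)
      + ennreal \<epsilon> * ennreal (exponential_density (1 / M) x * (ln (\<delta> x) - ln M)\<^sup>2) \<partial>lborel)"
  proof (rule nn_integral_mono)
    fix x :: real
    show "ennreal c * (ennreal (exponential_density (1 / M) x) * indicator {..x\<^sub>0} x)
      \<le> ennreal (1 - \<epsilon>) * ennreal (exponential_density 1 x * (ln (\<delta> x))\<^sup>2)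
        + ennreal \<epsilon> * ennreal (exponential_density (1 / M) x * (ln (\<delta> x) - ln M)\<^sup>2)"
    proof (cases "0 \<le> x \<and> x \<le> x\<^sub>0")
      case True
      have "c * exponential_density (1 / M) x
        \<le> (1 - \<epsilon>) * (exponential_density 1 x * (ln (\<delta> x))\<^sup>2)
          + \<epsilon> * (exponential_density (1 / M) x * (ln (\<delta> x) - ln M)\<^sup>2)"
        using two_point_loss_lower_bound[OF assms(2-5), of x "ln (\<delta> x)"] True
        by (simp add: c_def x\<^sub>0_def algebra_simps)
      then show ?thesis
        using True assms c0
        by (simp add: ennreal_mult[symmetric] ennreal_plus[symmetric] exponential_density_def
            del: ennreal_plus)
    qed (auto simp: exponential_density_def)
  qed
  also have "\<dots> = ennreal (1 - \<epsilon>) * risk \<delta> 1 + ennreal \<epsilon> * risk \<delta> M"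
    unfolding risk_def by (simp add: nn_integral_add nn_integral_cmult)
  finally show ?thesis .
qed

definition two_point_prior :: "real \<Rightarrow> real \<Rightarrow> real measure" where
  "two_point_prior \<epsilon> M = distr (measure_pmf (bernoulli_pmf \<epsilon>)) borel (\<lambda>b. if b then M else 1)"

lemma bayes_risk_two_point_prior:
  assumes "\<delta> \<in> borel_measurable borel" and "0 \<le> \<epsilon>" "\<epsilon> \<le> 1"
  shows "bayes_risk (two_point_prior \<epsilon> M) \<delta> = ennreal (1 - \<epsilon>) * risk \<delta> 1 + ennreal \<epsilon> * risk \<delta> M"
proof -
  have "bayes_risk (two_point_prior \<epsilon> M) \<delta>
      = (\<integral>\<^sup>+ b. risk \<delta> (if b then M else 1) \<partial>measure_pmf (bernoulli_pmf \<epsilon>))"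
    unfolding bayes_risk_eq_nn_integral_risk two_point_prior_def
    using borel_measurable_risk[OF assms(1)] by (intro nn_integral_distr) simp_all
  then show ?thesis
    using assms by (simp add: mult.commute add.commute)
qed

lemma two_point_prior_in_prior_class:
  assumes "0 \<le> \<epsilon>" "\<epsilon> \<le> 1" "1 \<le> M" "\<epsilon> * (ln M) powr p \<le> \<eta> powr p"
  shows "two_point_prior \<epsilon> M \<in> prior_class p \<eta>"
proof -
  have "prob_space (two_point_prior \<epsilon> M)"
    unfolding two_point_prior_def by (simp add: prob_space.prob_space_distr prob_space_measure_pmf)
  moreover have "sets (two_point_prior \<epsilon> M) = sets borel"
    unfolding two_point_prior_def by simp
  moreover have "emeasure (two_point_prior \<epsilon> M) {..<1} = 0"
  proof -
    have "(\<lambda>b. if b then M else 1) -` {..<1} = {}"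
      using assms(3) by (auto split: if_splits)
    then show ?thesis
      unfolding two_point_prior_def by (simp add: emeasure_distr)
  qed
  moreover have "(\<integral>\<^sup>+ \<mu>. ennreal ((ln \<mu>) powr p) \<partial>two_point_prior \<epsilon> M) = ennreal (\<epsilon> * (ln M) powr p)"
    unfolding two_point_prior_def using assms
    by (subst nn_integral_distr) (simp_all add: ennreal_mult' mult.commute)
  ultimately show ?thesis
    using assms(4) unfolding prior_class_def by (auto intro: ennreal_leI)
qed

lemma two_point_bound_le_minimax_bayes_risk:
  assumes "0 < \<epsilon>" "\<epsilon> < 1" "1 < M" "1 / (M * (1 - \<epsilon>)) \<le> 1" "\<epsilon> * (ln M) powr p \<le> \<eta> powr p"
  shows "ennreal (two_point_bound \<epsilon> M) \<le> minimax_bayes_risk p \<eta>"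
  unfolding minimax_bayes_risk_def
proof (rule INF_greatest)
  fix \<delta> assume "\<delta> \<in> estimators"
  then have \<delta>: "\<delta> \<in> borel_measurable borel"
    unfolding estimators_def by simp
  have "ennreal (two_point_bound \<epsilon> M) \<le> bayes_risk (two_point_prior \<epsilon> M) \<delta>"
    using two_point_risk_lower_bound[OF \<delta> assms(1-4)] assms by (simp add: bayes_risk_two_point_prior[OF \<delta>])
  also have "\<dots> \<le> (SUP F\<in>prior_class p \<eta>. bayes_risk F \<delta>)"
    using assms by (intro SUP_upper two_point_prior_in_prior_class) auto
  finally show "ennreal (two_point_bound \<epsilon> M) \<le> (SUP F\<in>prior_class p \<eta>. bayes_risk F \<delta>)" .
qed

section \<open>Upper bound via a threshold estimator\<close>

lemma nn_integral_ln_diff_squared_le: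
  fixes t \<mu> :: real
  assumes "0 < t"
  shows "(\<integral>\<^sup>+ x. ennreal (indicator {t..\<mu>} x * (ln \<mu> - ln x)\<^sup>2) \<partial>lborel) \<le> ennreal (2 * \<mu>)"
proof (cases "t \<le> \<mu>")
  case False
  then show ?thesis by simp
next
  case True
  define F where "F x = x * ((ln \<mu> - ln x)\<^sup>2 + 2 * (ln \<mu> - ln x) + 2)" for x
  have "((\<lambda>x. (ln \<mu> - ln x)\<^sup>2) has_integral (F \<mu> - F t)) {t..\<mu>}"
  proof (rule fundamental_theorem_of_calculus[OF True])
    fix x assume "x \<in> {t..\<mu>}"
    then have "0 < x" using assms by auto
    then have "(F has_real_derivative (ln \<mu> - ln x)\<^sup>2) (at x)"
      unfolding F_def
      by (auto intro!: derivative_eq_intros simp: field_simps power2_eq_square)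
    then show "(F has_vector_derivative (ln \<mu> - ln x)\<^sup>2) (at x within {t..\<mu>})"
      by (simp add: has_real_derivative_iff_has_vector_derivative[symmetric] has_field_derivative_at_within)
  qed
  then have "(\<integral>\<^sup>+ x. ennreal (indicator {t..\<mu>} x * (ln \<mu> - ln x)\<^sup>2) \<partial>lborel) = ennreal (F \<mu> - F t)"
    by (intro nn_integral_has_integral_lebesgue) simp_all
  moreover have "F t = t * ((ln \<mu> - ln t + 1)\<^sup>2 + 1)"
    unfolding F_def by (simp add: power2_eq_square algebra_simps)
  then have "F \<mu> - F t \<le> 2 * \<mu>"
    using assms by (simp add: F_def[of \<mu>])
  ultimately show ?thesis
    by (simp add: ennreal_leI)
qed

lemma ln_squared_le:
  fixes x :: real
  assumes "1 \<le> x"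
  shows "(ln x)\<^sup>2 \<le> 4 * x"
proof -
  have "ln x = 2 * ln (sqrt x)"
    using assms by (simp add: ln_sqrt)
  also have "\<dots> \<le> 2 * sqrt x"
    using ln_le_minus_one[of "sqrt x"] assms by simp
  finally have "(ln x)\<^sup>2 \<le> (2 * sqrt x)\<^sup>2"
    using assms by (intro power_mono) simp_all
  also have "\<dots> = 4 * x"
    using assms by (simp add: power_mult_distrib)
  finally show ?thesis .
qed

lemma ln_squared_mul_ratio_le:
  fixes t \<mu> p :: real
  assumes "exp 2 \<le> t" "t < \<mu>" "0 \<le> p"
  shows "(ln \<mu>)\<^sup>2 * (t / \<mu>) \<le> ln t powr (2 - p) * ln \<mu> powr p"
proof -
  have t0: "0 < t"
    using assms(1) exp_gt_zero[of 2] by linarith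
  then have lt: "2 \<le> ln t"
    using assms(1) by (simp add: ln_ge_iff)
  then have lt0: "0 < ln t" by simp
  define s where "s = \<mu> / t"
  have s1: "1 < s"
    unfolding s_def using assms t0 by simp
  have lm: "ln \<mu> = ln t + ln s"
    unfolding s_def using t0 assms(2) by (simp add: ln_div)
  have ls0: "0 \<le> ln s" using s1 by simp
  have q1: "1 \<le> ln \<mu> / ln t"
    using lm ls0 lt0 by simp
  have "ln \<mu> / ln t \<le> 1 + ln s / 2"
    using lm lt lt0 ls0 divide_left_mono[of 2 "ln t" "ln s"] by (simp add: add_divide_distrib)
  also have "\<dots> \<le> exp (ln s / 2)"
    by (rule exp_ge_add_one_self)
  finally have "(ln \<mu> / ln t)\<^sup>2 \<le> (exp (ln s / 2))\<^sup>2"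
    using q1 by (intro power_mono) auto
  also have "\<dots> = s"
    using s1 by (simp add: exp_double[symmetric])
  finally have "(ln \<mu> / ln t) powr 2 \<le> s"
    using q1 by (simp add: powr_numeral)
  then have key: "(ln \<mu> / ln t) powr (2 - p) \<le> s"
    using q1 assms(3) powr_mono[of "2 - p" 2 "ln \<mu> / ln t"] by linarith
  have lmp: "0 < ln \<mu>"
    using lm ls0 lt0 by simp
  have "(ln \<mu>)\<^sup>2 = (ln \<mu> / ln t) powr (2 - p) * ln t powr (2 - p) * ln \<mu> powr p"
    using lmp lt0 by (simp add: powr_divide powr_add[symmetric] powr_numeral)
  then have "(ln \<mu>)\<^sup>2 * (t / \<mu>) = ((ln \<mu> / ln t) powr (2 - p) / s) * (ln t powr (2 - p) * ln \<mu> powr p)"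
    unfolding s_def by simp
  also have "\<dots> \<le> ln t powr (2 - p) * ln \<mu> powr p"
    using key s1 by (intro mult_left_le_one_le) auto
  finally show ?thesis .
qed

definition threshold_estimator :: "real \<Rightarrow> real \<Rightarrow> real" where
  "threshold_estimator t x = (if x < t then 1 else x)"

lemma borel_measurable_threshold_estimator [measurable]:
  "threshold_estimator t \<in> borel_measurable borel"
  unfolding threshold_estimator_def by measurable

lemma threshold_estimator_in_estimators: "0 < t \<Longrightarrow> threshold_estimator t \<in> estimators"
  unfolding estimators_def threshold_estimator_def by auto

lemma threshold_loss_le_small:
  fixes t \<mu> x :: real
  assumes "1 \<le> \<mu>" "\<mu> \<le> t"
  shows "exponential_density (1 / \<mu>) x * (ln (threshold_estimator t x) - ln \<mu>)\<^sup>2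
    \<le> (ln \<mu>)\<^sup>2 * exponential_density (1 / \<mu>) x
      + 8 * exp (- t / (2 * \<mu>)) * (exponential_density (1 / (2 * \<mu>)) x * x)"
proof (cases "x < t")
  case True
  then show ?thesis
    using assms by (simp add: threshold_estimator_def exponential_density_def)
next
  case False
  then have xt: "t \<le> x" and x1: "1 \<le> x" and x0: "0 < x"
    using assms by linarith+
  have "(ln x - ln \<mu>)\<^sup>2 \<le> (ln x)\<^sup>2"
    using assms xt by (intro power_mono) auto
  also have "\<dots> \<le> 4 * x"
    using x1 by (rule ln_squared_le)
  finally have sq: "(ln x - ln \<mu>)\<^sup>2 \<le> 4 * x" .
  have "exp (- (x / \<mu>)) = exp (- x / (2 * \<mu>)) * exp (- x / (2 * \<mu>))"
    by (simp add: exp_add[symmetric] field_simps)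
  also have "\<dots> \<le> exp (- x / (2 * \<mu>)) * exp (- t / (2 * \<mu>))"
    using xt assms by (intro mult_left_mono) (auto simp: divide_right_mono)
  finally have "exp (- (x / \<mu>)) * (ln x - ln \<mu>)\<^sup>2 / \<mu>
      \<le> exp (- x / (2 * \<mu>)) * exp (- t / (2 * \<mu>)) * (4 * x) / \<mu>"
    using sq assms by (intro divide_right_mono mult_mono) auto
  then show ?thesis
    using xt x0 assms
    by (simp add: threshold_estimator_def exponential_density_def field_simps add_increasing)
qed

lemma threshold_loss_le_large:
  fixes t \<mu> x :: real
  assumes "0 < t" "0 < \<mu>"
  shows "exponential_density (1 / \<mu>) x * (ln (threshold_estimator t x) - ln \<mu>)\<^sup>2
    \<le> (ln \<mu>)\<^sup>2 * (exponential_density (1 / \<mu>) x * indicator {..t} x)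
      + 1 / \<mu> * (indicator {t..\<mu>} x * (ln \<mu> - ln x)\<^sup>2)
      + 4 / \<mu> * (exponential_density (1 / \<mu>) x * x)"
    (is "?loss \<le> ?A + ?B + ?C")
proof -
  have "0 \<le> ?A" "0 \<le> ?B" "0 \<le> ?C"
    using assms by (simp_all add: exponential_density_def)
  moreover consider "x < t" | "t \<le> x" "x \<le> \<mu>" | "t \<le> x" "\<mu> < x"
    by linarith
  then have "?loss \<le> ?A \<or> ?loss \<le> ?B \<or> ?loss \<le> ?C"
  proof cases
    case 1
    then show ?thesis
      by (simp add: threshold_estimator_def)
  next
    case 2
    have "exponential_density (1 / \<mu>) x \<le> 1 / \<mu>"
      using 2 assms by (simp add: exponential_density_def divide_le_eq)
    from mult_right_mono[OF this zero_le_power2[of "ln \<mu> - ln x"]]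
    show ?thesis
      using 2 by (simp add: threshold_estimator_def power2_commute)
  next
    case 3
    then have "(ln x - ln \<mu>)\<^sup>2 = (ln (x / \<mu>))\<^sup>2"
      using assms by (simp add: ln_div)
    also have "\<dots> \<le> 4 * (x / \<mu>)"
      using 3 assms by (intro ln_squared_le) simp
    finally have "exponential_density (1 / \<mu>) x * (ln x - ln \<mu>)\<^sup>2
        \<le> exponential_density (1 / \<mu>) x * (4 * (x / \<mu>))"
      using assms by (intro mult_left_mono) (simp_all add: exponential_density_def)
    then show ?thesis
      using 3 assms by (simp add: threshold_estimator_def mult_ac)
  qed
  ultimately show ?thesis
    by linarith
qed

lemma nn_integral_exponential_density: "0 < l \<Longrightarrow> (\<integral>\<^sup>+ x. ennreal (exponential_density l x) \<partial>lborel) = 1"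
  using nn_integral_erlang_ith_moment[of l 0 0] by simp

lemma nn_integral_exponential_density_mean:
  "0 < l \<Longrightarrow> (\<integral>\<^sup>+ x. ennreal (exponential_density l x * x) \<partial>lborel) = ennreal (1 / l)"
  using nn_integral_erlang_ith_moment[of l 0 1] by simp

lemma risk_threshold_le_small:
  assumes "1 \<le> \<mu>" "\<mu> \<le> t"
  shows "risk (threshold_estimator t) \<mu> \<le> ennreal ((ln \<mu>)\<^sup>2 + 16 * \<mu> * exp (- t / (2 * \<mu>)))"
proof -
  define c where "c = 8 * exp (- t / (2 * \<mu>))"
  have [simp]: "0 \<le> exponential_density l x" if "0 < l" for l x :: real
    using that by (simp add: exponential_density_def)
  have "risk (threshold_estimator t) \<mu> \<le> (\<integral>\<^sup>+ x. ennreal ((ln \<mu>)\<^sup>2) * ennreal (exponential_density (1 / \<mu>) x)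
      + ennreal c * ennreal (exponential_density (1 / (2 * \<mu>)) x * x) \<partial>lborel)"
    unfolding risk_def using assms threshold_loss_le_small[OF assms]
    by (intro nn_integral_mono)
       (simp add: c_def exponential_density_def ennreal_mult[symmetric] ennreal_plus[symmetric] ennreal_leI
         del: ennreal_plus)
  also have "\<dots> = ennreal ((ln \<mu>)\<^sup>2) * (\<integral>\<^sup>+ x. ennreal (exponential_density (1 / \<mu>) x) \<partial>lborel)
      + ennreal c * (\<integral>\<^sup>+ x. ennreal (exponential_density (1 / (2 * \<mu>)) x * x) \<partial>lborel)"
    by (simp add: nn_integral_add nn_integral_cmult)
  also have "\<dots> = ennreal ((ln \<mu>)\<^sup>2 + 16 * \<mu> * exp (- t / (2 * \<mu>)))"
    using assms
    by (simp add: nn_integral_exponential_density nn_integral_exponential_density_mean c_def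
        ennreal_mult[symmetric] ennreal_plus[symmetric] del: ennreal_plus)
  finally show ?thesis .
qed

lemma risk_threshold_le_large:
  assumes "0 < t" "0 < \<mu>"
  shows "risk (threshold_estimator t) \<mu> \<le> ennreal ((ln \<mu>)\<^sup>2 * (1 - exp (- t / \<mu>)) + 6)"
proof -
  have [simp]: "0 \<le> exponential_density (1 / \<mu>) x" "0 \<le> exponential_density (1 / \<mu>) x * x" for x
    using assms by (simp_all add: exponential_density_def)
  have "risk (threshold_estimator t) \<mu>
      \<le> (\<integral>\<^sup>+ x. ennreal ((ln \<mu>)\<^sup>2) * (ennreal (exponential_density (1 / \<mu>) x) * indicator {..t} x)
        + ennreal (1 / \<mu>) * ennreal (indicator {t..\<mu>} x * (ln \<mu> - ln x)\<^sup>2)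
        + ennreal (4 / \<mu>) * ennreal (exponential_density (1 / \<mu>) x * x) \<partial>lborel)"
    unfolding risk_def using assms threshold_loss_le_large[OF assms]
    by (intro nn_integral_mono)
       (simp add: ennreal_mult[symmetric] ennreal_plus[symmetric] ennreal_indicator[symmetric] ennreal_leI
         del: ennreal_plus)
  also have "\<dots> = ennreal ((ln \<mu>)\<^sup>2) * (\<integral>\<^sup>+ x. ennreal (exponential_density (1 / \<mu>) x) * indicator {..t} x \<partial>lborel)
        + ennreal (1 / \<mu>) * (\<integral>\<^sup>+ x. ennreal (indicator {t..\<mu>} x * (ln \<mu> - ln x)\<^sup>2) \<partial>lborel)
        + ennreal (4 / \<mu>) * (\<integral>\<^sup>+ x. ennreal (exponential_density (1 / \<mu>) x * x) \<partial>lborel)"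
    by (simp add: nn_integral_add nn_integral_cmult)
  also have "\<dots> \<le> ennreal ((ln \<mu>)\<^sup>2) * ennreal (1 - exp (- t / \<mu>))
        + ennreal (1 / \<mu>) * ennreal (2 * \<mu>) + ennreal (4 / \<mu>) * ennreal \<mu>"
    using assms
    by (intro add_mono mult_left_mono order.refl nn_integral_ln_diff_squared_le)
       (simp_all add: nn_integral_erlang_density erlang_CDF_0 nn_integral_exponential_density_mean)
  also have "\<dots> = ennreal ((ln \<mu>)\<^sup>2 * (1 - exp (- t / \<mu>))) + 6"
    using assms by (simp add: ennreal_mult[symmetric] add.assoc del: ennreal_plus)
  also have "\<dots> = ennreal ((ln \<mu>)\<^sup>2 * (1 - exp (- t / \<mu>)) + 6)"
    using assms by simp
  finally show ?thesis .
qed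

lemma ln_squared_mul_one_minus_exp_le:
  fixes t \<mu> p :: real
  assumes "exp 2 \<le> t" "1 < \<mu>" "0 \<le> p" "p \<le> 2"
  shows "(ln \<mu>)\<^sup>2 * (1 - exp (- t / \<mu>)) \<le> ln t powr (2 - p) * ln \<mu> powr p"
proof (cases "\<mu> \<le> t")
  case True
  have "(ln \<mu>)\<^sup>2 * (1 - exp (- t / \<mu>)) \<le> (ln \<mu>)\<^sup>2"
    using assms by (simp add: mult_left_le)
  also have "\<dots> = ln \<mu> powr (2 - p) * ln \<mu> powr p"
    using assms by (simp add: powr_add[symmetric] powr_numeral)
  also have "\<dots> \<le> ln t powr (2 - p) * ln \<mu> powr p"
    using True assms by (intro mult_right_mono powr_mono2) auto
  finally show ?thesis .
next
  case False
  have "1 - exp (- t / \<mu>) \<le> t / \<mu>"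
    using exp_ge_add_one_self[of "- t / \<mu>"] by simp
  then have "(ln \<mu>)\<^sup>2 * (1 - exp (- t / \<mu>)) \<le> (ln \<mu>)\<^sup>2 * (t / \<mu>)"
    by (intro mult_left_mono) auto
  also have "\<dots> \<le> ln t powr (2 - p) * ln \<mu> powr p"
    using False assms by (intro ln_squared_mul_ratio_le) auto
  finally show ?thesis .
qed

lemma risk_threshold_le:
  assumes "exp 2 \<le> t" "1 \<le> \<mu>" "0 \<le> p" "p \<le> 2"
  shows "risk (threshold_estimator t) \<mu>
    \<le> ennreal (16 * exp 1 * exp (- t / (2 * exp 1)) + (ln t powr (2 - p) + 6) * ln \<mu> powr p)"
proof -
  have t: "0 < t" "exp 1 \<le> t"
    using assms(1) exp_gt_zero[of 2] exp_le_cancel_iff[of 1 2] by linarith+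
  have mu: "0 < \<mu>" "0 \<le> ln \<mu>"
    using assms(2) by simp_all
  show ?thesis
  proof (cases "\<mu> \<le> exp 1")
    case True
    then have "ln \<mu> \<le> 1"
      using mu ln_le_cancel_iff[of \<mu> "exp 1"] by simp
    then have "(ln \<mu>)\<^sup>2 \<le> ln \<mu> powr p"
      using mu assms powr_mono'[of p 2 "ln \<mu>"] by (cases "ln \<mu> = 0") (simp_all add: powr_numeral)
    moreover have "0 \<le> ln t powr (2 - p) * ln \<mu> powr p + 5 * ln \<mu> powr p"
      by simp
    moreover have "16 * \<mu> * exp (- t / (2 * \<mu>)) \<le> 16 * exp 1 * exp (- t / (2 * exp 1))"
      using True mu t by (intro mult_mono) (auto simp: frac_le)
    ultimately have "(ln \<mu>)\<^sup>2 + 16 * \<mu> * exp (- t / (2 * \<mu>))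
        \<le> 16 * exp 1 * exp (- t / (2 * exp 1)) + (ln t powr (2 - p) + 6) * ln \<mu> powr p"
      unfolding distrib_right by linarith
    with risk_threshold_le_small[of \<mu> t] True t assms show ?thesis
      by (meson ennreal_leI order.trans)
  next
    case False
    then have "1 \<le> ln \<mu>"
      using mu by (simp add: ln_ge_iff)
    then have "6 \<le> 6 * ln \<mu> powr p"
      using assms(3) ge_one_powr_ge_zero[of "ln \<mu>" p] by simp
    moreover have "(ln \<mu>)\<^sup>2 * (1 - exp (- t / \<mu>)) \<le> ln t powr (2 - p) * ln \<mu> powr p"
      using False assms order.strict_trans[of 1 "exp 1" \<mu>] by (intro ln_squared_mul_one_minus_exp_le) auto
    ultimately have "(ln \<mu>)\<^sup>2 * (1 - exp (- t / \<mu>)) + 6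
        \<le> 16 * exp 1 * exp (- t / (2 * exp 1)) + (ln t powr (2 - p) + 6) * ln \<mu> powr p"
      unfolding distrib_right by (simp add: add_increasing)
    with risk_threshold_le_large[OF t(1) mu(1)] show ?thesis
      by (meson ennreal_leI order.trans)
  qed
qed

lemma bayes_risk_le_of_risk_le:
  assumes "F \<in> prior_class p \<eta>" "0 \<le> a" "0 \<le> c"
    and "\<And>\<mu>. 1 \<le> \<mu> \<Longrightarrow> risk \<delta> \<mu> \<le> ennreal (a + c * ln \<mu> powr p)"
  shows "bayes_risk F \<delta> \<le> ennreal (a + c * \<eta> powr p)"
proof -
  have F: "prob_space F" "sets F = sets borel" "emeasure F {..<1} = 0"
    and moment: "(\<integral>\<^sup>+ \<mu>. ennreal (ln \<mu> powr p) \<partial>F) \<le> ennreal (\<eta> powr p)"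
    using assms(1) unfolding prior_class_def by auto
  have "AE \<mu> in F. 1 \<le> \<mu>"
    using F by (intro AE_I'[of "{..<1}"]) (auto intro: null_setsI)
  then have "bayes_risk F \<delta> \<le> (\<integral>\<^sup>+ \<mu>. ennreal a + ennreal c * ennreal (ln \<mu> powr p) \<partial>F)"
    unfolding bayes_risk_eq_nn_integral_risk
    by (intro nn_integral_mono_AE) (auto elim!: eventually_mono dest!: assms(4) simp: assms ennreal_mult)
  also have "\<dots> = ennreal a * emeasure F (space F) + ennreal c * (\<integral>\<^sup>+ \<mu>. ennreal (ln \<mu> powr p) \<partial>F)"
    by (subst nn_integral_add) (simp_all add: measurable_cong_sets[OF F(2) refl] nn_integral_cmult)
  also have "\<dots> \<le> ennreal a * 1 + ennreal c * ennreal (\<eta> powr p)"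
    using prob_space.emeasure_space_1[OF F(1)] moment by (intro add_mono mult_left_mono) auto
  also have "\<dots> = ennreal (a + c * \<eta> powr p)"
    using assms by (simp add: ennreal_mult)
  finally show ?thesis .
qed

lemma minimax_bayes_risk_le_threshold_bound:
  assumes "exp 2 \<le> t" "0 \<le> p" "p \<le> 2"
  shows "minimax_bayes_risk p \<eta>
    \<le> ennreal (16 * exp 1 * exp (- t / (2 * exp 1)) + (ln t powr (2 - p) + 6) * \<eta> powr p)"
proof -
  have "0 < t"
    using assms(1) exp_gt_zero[of 2] by linarith
  then have "minimax_bayes_risk p \<eta> \<le> (SUP F\<in>prior_class p \<eta>. bayes_risk F (threshold_estimator t))"
    unfolding minimax_bayes_risk_def by (intro INF_lower threshold_estimator_in_estimators)
  also have "\<dots> \<le> ennreal (16 * exp 1 * exp (- t / (2 * exp 1)) + (ln t powr (2 - p) + 6) * \<eta> powr p)"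
    using assms by (intro SUP_least bayes_risk_le_of_risk_le risk_threshold_le) auto
  finally show ?thesis .
qed

section \<open>Asymptotics\<close>

lemma eventually_two_point_bound_le_minimax_bayes_risk:
  fixes p :: real
  assumes "0 < p"
  defines "M \<equiv> \<lambda>\<eta>. ln (1 / \<eta>) / ln (ln (1 / \<eta>))"
  shows "\<forall>\<^sub>F \<eta> in at_right 0. ennreal (two_point_bound ((\<eta> / ln (M \<eta>)) powr p) (M \<eta>)) \<le> minimax_bayes_risk p \<eta>"
proof -
  define \<epsilon> where "\<epsilon> \<eta> = (\<eta> / ln (M \<eta>)) powr p" for \<eta>
  have "\<forall>\<^sub>F \<eta> in at_right 0. 0 < \<eta> \<and> 1 < M \<eta> \<and> \<epsilon> \<eta> < 1 \<and> 1 / (M \<eta> * (1 - \<epsilon> \<eta>)) \<le> 1"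
    unfolding \<epsilon>_def M_def using assms by (intro eventually_conj eventually_at_right_less) real_asymp+
  then show ?thesis
  proof eventually_elim
    case (elim \<eta>)
    then have "\<epsilon> \<eta> * ln (M \<eta>) powr p = \<eta> powr p"
      by (simp add: \<epsilon>_def powr_divide)
    with elim show ?case
      unfolding \<epsilon>_def by (intro two_point_bound_le_minimax_bayes_risk) auto
  qed
qed

lemma eventually_minimax_bayes_risk_le_threshold_bound:
  fixes p :: real
  assumes "0 \<le> p" "p \<le> 2"
  defines "t \<equiv> \<lambda>\<eta>. 2 * exp 1 * (p + 1) * ln (1 / \<eta>)"
  shows "\<forall>\<^sub>F \<eta> in at_right 0. minimax_bayes_risk p \<eta>
    \<le> ennreal (16 * exp 1 * \<eta> powr (p + 1) + (ln (t \<eta>) powr (2 - p) + 6) * \<eta> powr p)"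
proof -
  have "\<forall>\<^sub>F \<eta> in at_right 0. 0 < \<eta> \<and> exp 2 \<le> t \<eta>"
    unfolding t_def using assms by (intro eventually_conj eventually_at_right_less) real_asymp
  then show ?thesis
  proof eventually_elim
    case (elim \<eta>)
    then have "exp (- t \<eta> / (2 * exp 1)) = \<eta> powr (p + 1)"
      by (simp add: t_def powr_def ln_div)
    with elim assms show ?case
      using minimax_bayes_risk_le_threshold_bound[of "t \<eta>" p \<eta>] by simp
  qed
qed

lemma tendsto_enn2real_ratio_sandwich:
  fixes l u d :: "'a \<Rightarrow> real" and r :: "'a \<Rightarrow> ennreal"
  assumes "0 < c"
    and "\<forall>\<^sub>F x in F. ennreal (l x) \<le> r x" "\<forall>\<^sub>F x in F. r x \<le> ennreal (u x)" "\<forall>\<^sub>F x in F. 0 < d x"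
    and "((\<lambda>x. l x / d x) \<longlongrightarrow> c) F" "((\<lambda>x. u x / d x) \<longlongrightarrow> c) F"
  shows "((\<lambda>x. enn2real (r x) / d x) \<longlongrightarrow> c) F"
proof (rule tendsto_sandwich[OF _ _ assms(5,6)])
  have "\<forall>\<^sub>F x in F. 0 < u x / d x"
    using order_tendstoD(1)[OF assms(6,1)] .
  with assms(2-4) have bounds: "\<forall>\<^sub>F x in F. l x \<le> enn2real (r x) \<and> enn2real (r x) \<le> u x"
  proof eventually_elim
    case (elim x)
    then have "0 \<le> u x"
      by (simp add: zero_less_divide_iff)
    then have "r x < \<top>"
      using elim le_less_trans[of "r x" "ennreal (u x)"] by simp
    then have "l x \<le> enn2real (r x)"
      using elim enn2real_mono[of "ennreal (l x)" "r x"]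
      by (cases "0 \<le> l x") (auto intro: order.trans[OF _ enn2real_nonneg])
    moreover have "enn2real (r x) \<le> u x"
      using elim \<open>0 \<le> u x\<close> enn2real_mono[of "r x" "ennreal (u x)"] by simp
    ultimately show ?case ..
  qed
  with assms(4) show "\<forall>\<^sub>F x in F. l x / d x \<le> enn2real (r x) / d x"
    by eventually_elim (simp add: divide_right_mono)
  from bounds assms(4) show "\<forall>\<^sub>F x in F. enn2real (r x) / d x \<le> u x / d x"
    by eventually_elim (simp add: divide_right_mono)
qed

theorem theorem2p3:
  fixes p :: real
  assumes "0 < p" and "p < 2"
  shows "((\<lambda>\<eta>. enn2real (minimax_bayes_risk p \<eta>) /
            (\<eta> powr p * (ln (ln (1 / \<eta>))) powr (2 - p))) \<longlongrightarrow> 1) (at_right 0)"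
proof -
  note lower = eventually_two_point_bound_le_minimax_bayes_risk[OF assms(1), unfolded two_point_bound_def]
  note upper = eventually_minimax_bayes_risk_le_threshold_bound[OF less_imp_le less_imp_le, OF assms]
  have pos: "\<forall>\<^sub>F \<eta> in at_right 0. 0 < \<eta> powr p * ln (ln (1 / \<eta>)) powr (2 - p)"
    using assms by real_asymp
  show ?thesis
    using assms by (intro tendsto_enn2real_ratio_sandwich[OF zero_less_one lower upper pos]) real_asymp+
qed

end
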